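(* Let $\alpha\in[0,1)$, $\sigma=\frac{1+\alpha}{2}$ (so $\rho:=\frac{1-\alpha}{1-\sigma}=2$), $\mu=\frac{8}{\sqrt{1-\alpha}}$, and let $\omega:\mathbb{R}_+\to(0,\infty)$ be non-decreasing. Let $(\lambda_k),(x_k),(y_k)$ be generated by the acceleration framework (context) up to $K$ for convex differentiable $g$ with minimizer $x^*$, with $\delta\le\frac{\|x^*\|}{\mu A_K}$ and $\lambda_k\ge\frac{1}{\rho\,\omega(\|y_k-\tilde x_{k-1}\|)}$ for all $k\in[K]$. Then for all $k\in[K]$ and all integers $J$ with $0<J<k/2$, \[ A_k\ge\min\left\{\frac{4^J}{\rho\,\omega(\mu\|x^*\|/4)},\ \frac{(k/J)^2}{16\rho\,\omega\!\left(\frac{4\mu\|x^*\|}{(k/J)^{3/2}}\right)}\right\}. \] Further, if $\|x^*\|\le R$ then $A_k\ge\frac{1}{2\omega(2\mu R)}$ for all $k\in[K]$.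
   Context: Acceleration framework: let $g:\mathbb{R}^d\to\mathbb{R}$ be convex and differentiable, $\sigma\in(0,1)$, $\delta\ge0$, $K\ge1$. Sequences $(\lambda_k)_{k=1}^K\subset(0,\infty)$ and $(x_k)_{k=0}^K,(y_k)_{k=0}^K\subset\mathbb{R}^d$ are generated by the framework if $x_0=y_0=0$, $A_0=0$, and for each $k=0,\dots,K-1$, with $a_{k+1}=\frac12\big[\lambda_{k+1}+\sqrt{\lambda_{k+1}^2+4\lambda_{k+1}A_k}\big]$, $A_{k+1}=A_k+a_{k+1}$, $\tilde x_k=\frac{A_k}{A_{k+1}}y_k+\frac{a_{k+1}}{A_{k+1}}x_k$, one has $\|\lambda_{k+1}\nabla g(y_{k+1})+y_{k+1}-\tilde x_k\|\le\sigma\|y_{k+1}-\tilde x_k\|+\lambda_{k+1}\delta$ and $\|x_{k+1}-(x_k-a_{k+1}\nabla g(y_{k+1}))\|\le a_{k+1}\delta$. (Note $\lambda_{k+1}A_{k+1}=a_{k+1}^2$.) *)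

theory Defs
  imports "HOL-Analysis.Analysis"
begin

fun acc_A :: "(nat \<Rightarrow> real) \<Rightarrow> nat \<Rightarrow> real" where
  "acc_A lam 0 = 0"
| "acc_A lam (Suc k) = acc_A lam k
     + (lam (Suc k) + sqrt ((lam (Suc k))\<^sup>2 + 4 * lam (Suc k) * acc_A lam k)) / 2"

text \<open>a_{k+1} = (lambda_{k+1} + sqrt(lambda_{k+1}^2 + 4 lambda_{k+1} A_k))/2; a_0 is unused (set to 0).\<close>
fun acc_a :: "(nat \<Rightarrow> real) \<Rightarrow> nat \<Rightarrow> real" where
  "acc_a lam 0 = 0"
| "acc_a lam (Suc k) = (lam (Suc k) + sqrt ((lam (Suc k))\<^sup>2 + 4 * lam (Suc k) * acc_A lam k)) / 2"

definition acc_xt :: "(nat \<Rightarrow> real) \<Rightarrow> (nat \<Rightarrow> 'a::real_vector) \<Rightarrow> (nat \<Rightarrow> 'a) \<Rightarrow> nat \<Rightarrow> 'a" where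
  "acc_xt lam x y k =
     (acc_A lam k / acc_A lam (Suc k)) *\<^sub>R y k + (acc_a lam (Suc k) / acc_A lam (Suc k)) *\<^sub>R x k"

definition acc_framework ::
  "('a::real_normed_vector \<Rightarrow> 'a) \<Rightarrow> real \<Rightarrow> real \<Rightarrow> nat \<Rightarrow> (nat \<Rightarrow> real) \<Rightarrow> (nat \<Rightarrow> 'a) \<Rightarrow> (nat \<Rightarrow> 'a) \<Rightarrow> bool" where
  "acc_framework G \<sigma> \<delta> K lam x y \<longleftrightarrow>
     x 0 = 0 \<and> y 0 = 0 \<and> (\<forall>k\<in>{1..K}. lam k > 0) \<and>
     (\<forall>k<K.
        norm (lam (Suc k) *\<^sub>R G (y (Suc k)) + y (Suc k) - acc_xt lam x y k)
          \<le> \<sigma> * norm (y (Suc k) - acc_xt lam x y k) + lam (Suc k) * \<delta>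
      \<and> norm (x (Suc k) - (x k - acc_a lam (Suc k) *\<^sub>R G (y (Suc k))))
          \<le> acc_a lam (Suc k) * \<delta>)"

end

theory Submission
  imports Defs
begin

(*
  A potential argument (Lyapunov function of the estimate sequence, with the inexact steps
  absorbed into sqrt of the potential) bounds the residual budget
  sum_i A_i r_i^2 / lambda_i <= Theta^2, Theta = mu |x*| / 4, where r_i = |y_i - xt_{i-1}|.
  Large residuals are thus rare, and small ones force large steps lambda_i >= 1/(2 omega(r_i)),
  each of which raises sqrt A by sqrt lambda_i / 2.  Cut [1, k] into J blocks of length about
  k/J: either A quadruples on every block, giving 4^J A_1, or on some block it does not, so
  the increments a_i there sum to less than 3 A_j and, by convexity of 1/a^2, more than half
  of the block has r_i <= 16 Theta / (k/J)^(3/2), which gives the second term of the minimum.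
*)

lemma acc_A_Suc: "acc_A lam (Suc k) = acc_A lam k + acc_a lam (Suc k)"
  by simp

declare acc_A.simps(2) [simp del] acc_a.simps(2) [simp del]

lemma acc_a_pos:
  assumes "lam (Suc k) > 0" "acc_A lam k \<ge> 0"
  shows "acc_a lam (Suc k) > 0"
  using assms by (simp add: acc_a.simps(2) add_pos_nonneg)

lemma acc_A_nonneg: "\<forall>i\<in>{1..n}. lam i > 0 \<Longrightarrow> acc_A lam n \<ge> 0"
proof (induction n)
  case (Suc n)
  then show ?case using acc_a_pos[of lam n] by (simp add: acc_A_Suc)
qed simp

lemma acc_A_mono:
  assumes "\<forall>i\<in>{1..n}. lam i > 0" "i \<le> j" "j \<le> n"
  shows "acc_A lam i \<le> acc_A lam j"
  using assms(2,3)
proof (induction j)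
  case (Suc j)
  show ?case
  proof (cases "i = Suc j")
    case False
    with Suc.prems have "i \<le> j" by simp
    moreover have "acc_a lam (Suc j) > 0"
      using assms(1) Suc.prems by (intro acc_a_pos acc_A_nonneg) auto
    ultimately show ?thesis using Suc by (simp add: acc_A_Suc)
  qed simp
qed simp

lemma acc_A_1: "lam 1 > 0 \<Longrightarrow> acc_A lam 1 = lam 1"
  using acc_A_Suc[of lam 0] by (simp add: acc_a.simps(2) power2_eq_square)

lemma acc_A_pos:
  assumes "\<forall>i\<in>{1..n}. lam i > 0" "1 \<le> n"
  shows "acc_A lam n > 0"
proof -
  have "acc_A lam 1 > 0" using assms acc_A_1[of lam] by auto
  then show ?thesis using acc_A_mono[OF assms(1), of 1 n] assms(2) by linarith
qed

lemma acc_a_squared: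
  assumes "lam (Suc k) > 0" "acc_A lam k \<ge> 0"
  shows "(acc_a lam (Suc k))\<^sup>2 = lam (Suc k) * acc_A lam (Suc k)"
proof -
  define l s where "l = lam (Suc k)" and "s = sqrt (l\<^sup>2 + 4 * l * acc_A lam k)"
  have "s\<^sup>2 = l\<^sup>2 + 4 * l * acc_A lam k" using assms by (simp add: s_def l_def)
  then have "((l + s) / 2)\<^sup>2 = l * (acc_A lam k + (l + s) / 2)"
    by (simp add: power2_eq_square field_simps)
  then show ?thesis by (simp add: l_def s_def acc_A_Suc acc_a.simps(2))
qed

lemma sum_acc_a: "(\<Sum>i\<in>{Suc j..j + n}. acc_a lam i) = acc_A lam (j + n) - acc_A lam j"
  by (induction n) (simp_all add: acc_A_Suc)

text \<open>\<open>a\<^sub>k\<^sub>+\<^sub>1 = A\<^sub>k\<^sub>+\<^sub>1 - A\<^sub>k = (sqrt A\<^sub>k\<^sub>+\<^sub>1 - sqrt A\<^sub>k)(sqrt A\<^sub>k\<^sub>+\<^sub>1 + sqrt A\<^sub>k)\<close> and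
  \<open>a\<^sub>k\<^sub>+\<^sub>1 = sqrt \<lambda>\<^sub>k\<^sub>+\<^sub>1 sqrt A\<^sub>k\<^sub>+\<^sub>1\<close>; divide by \<open>sqrt A\<^sub>k\<^sub>+\<^sub>1 + sqrt A\<^sub>k \<le> 2 sqrt A\<^sub>k\<^sub>+\<^sub>1\<close>.\<close>
lemma sqrt_acc_A_Suc_ge:
  assumes "lam (Suc k) > 0" "acc_A lam k \<ge> 0"
  shows "sqrt (acc_A lam k) + sqrt (lam (Suc k)) / 2 \<le> sqrt (acc_A lam (Suc k))"
proof -
  define p q where "p = sqrt (acc_A lam k)" and "q = sqrt (acc_A lam (Suc k))"
  have a: "acc_a lam (Suc k) > 0" using acc_a_pos[OF assms] .
  have p2: "p\<^sup>2 = acc_A lam k" and q2: "q\<^sup>2 = acc_A lam (Suc k)"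
    using assms a by (simp_all add: p_def q_def acc_A_Suc)
  have "p \<ge> 0" "q \<ge> p" "q > 0" using assms a by (auto simp: p_def q_def acc_A_Suc)
  have "acc_a lam (Suc k) = sqrt ((acc_a lam (Suc k))\<^sup>2)" using a by simp
  also have "\<dots> = sqrt (lam (Suc k)) * q"
    by (simp add: acc_a_squared[OF assms] q_def real_sqrt_mult)
  finally have "(q - p) * (q + p) = sqrt (lam (Suc k)) * q"
    using p2 q2 acc_A_Suc[of lam k] by (simp add: power2_eq_square algebra_simps)
  moreover have "(q - p) * (q + p) \<le> (q - p) * (2 * q)"
    using \<open>p \<ge> 0\<close> \<open>q \<ge> p\<close> by (intro mult_left_mono) auto
  ultimately have "sqrt (lam (Suc k)) * q \<le> (2 * (q - p)) * q" by (simp add: algebra_simps)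
  then show ?thesis using \<open>q > 0\<close> by (simp add: p_def q_def)
qed

lemma sqrt_acc_A_add_ge:
  assumes "\<forall>i\<in>{1..j + n}. lam i > 0"
  shows "sqrt (acc_A lam j) + (\<Sum>i\<in>{Suc j..j + n}. sqrt (lam i)) / 2 \<le> sqrt (acc_A lam (j + n))"
  using assms
proof (induction n)
  case (Suc n)
  then have "\<forall>i\<in>{1..j + n}. lam i > 0" by auto
  with Suc have "sqrt (acc_A lam (j + n)) + sqrt (lam (Suc (j + n))) / 2 \<le> sqrt (acc_A lam (Suc (j + n)))"
    by (intro sqrt_acc_A_Suc_ge acc_A_nonneg) auto
  with Suc.IH[OF \<open>\<forall>i\<in>{1..j + n}. lam i > 0\<close>] show ?case
    by (simp add: add_divide_distrib)
qed simp

lemma convex_on_gradient_inequality: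
  fixes g :: "'a::real_inner \<Rightarrow> real"
  assumes "convex_on UNIV g" and "(g has_derivative (\<lambda>h. G \<bullet> h)) (at w)"
  shows "g w + G \<bullet> (z - w) \<le> g z"
proof -
  define \<phi> where "\<phi> t = g (w + t *\<^sub>R (z - w))" for t :: real
  have convex_\<phi>: "convex_on UNIV \<phi>"
  proof (rule convex_onI)
    fix t a b :: real assume "0 < t" "t < 1"
    have "w + ((1 - t) *\<^sub>R a + t *\<^sub>R b) *\<^sub>R (z - w)
        = (1 - t) *\<^sub>R (w + a *\<^sub>R (z - w)) + t *\<^sub>R (w + b *\<^sub>R (z - w))"
      by (simp add: algebra_simps)
    then show "\<phi> ((1 - t) *\<^sub>R a + t *\<^sub>R b) \<le> (1 - t) * \<phi> a + t * \<phi> b"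
      using convex_onD[OF assms(1), of t] \<open>0 < t\<close> \<open>t < 1\<close> by (simp add: \<phi>_def)
  qed auto
  have "((\<lambda>t. w + t *\<^sub>R (z - w)) has_derivative (\<lambda>t. t *\<^sub>R (z - w))) (at 0)"
    by (auto intro!: derivative_eq_intros)
  moreover have "(g has_derivative (\<lambda>h. G \<bullet> h)) (at (w + 0 *\<^sub>R (z - w)))"
    using assms(2) by simp
  ultimately have "(\<phi> has_derivative (\<lambda>t. G \<bullet> (t *\<^sub>R (z - w)))) (at 0)"
    unfolding \<phi>_def by (rule has_derivative_compose)
  then have "(\<phi> has_derivative (\<lambda>t. (G \<bullet> (z - w)) * t)) (at 0)"
    by (simp add: mult.commute)
  then have "(\<phi> has_field_derivative (G \<bullet> (z - w))) (at 0)"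
    by (simp add: has_field_derivative_def)
  with convex_\<phi> have "G \<bullet> (z - w) * (1 - 0) \<le> \<phi> 1 - \<phi> 0"
    by (intro convex_on_imp_above_tangent) auto
  then show ?thesis by (simp add: \<phi>_def)
qed

text \<open>Weighting the gradient inequalities at \<open>y\<close> by \<open>A\<^sub>k\<close> and \<open>a\<close> leaves, of the terms in
  \<open>v = \<nabla>g(y)\<close>, exactly \<open>(A'/\<lambda>)(\<parallel>\<lambda>v + y - x\<^sub>t\<parallel>\<^sup>2 - \<parallel>y - x\<^sub>t\<parallel>\<^sup>2)\<close>; the identity \<open>a\<^sup>2 = \<lambda>A'\<close>
  is what matches the quadratic terms.\<close>
lemma estimate_sequence_step:
  fixes v y yk xk xt xs :: "'a::real_inner" and Ak a A' lam gy gyk gxs bnd :: real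
  assumes "Ak \<ge> 0" "a > 0" "lam > 0" "A' = Ak + a" "a\<^sup>2 = lam * A'"
    and xt: "A' *\<^sub>R xt = Ak *\<^sub>R yk + a *\<^sub>R xk"
    and tangent_yk: "gy + v \<bullet> (yk - y) \<le> gyk" and tangent_xs: "gy + v \<bullet> (xs - y) \<le> gxs"
    and err: "norm (lam *\<^sub>R v + y - xt) \<le> bnd"
  shows "(norm (xk - a *\<^sub>R v - xs))\<^sup>2 + 2 * A' * (gy - gxs)
     \<le> (norm (xk - xs))\<^sup>2 + 2 * Ak * (gyk - gxs) + (A' / lam) * (bnd\<^sup>2 - (norm (y - xt))\<^sup>2)"
proof -
  have err_sq: "(norm (lam *\<^sub>R v + y - xt))\<^sup>2
      = lam\<^sup>2 * (v \<bullet> v) + 2 * lam * (v \<bullet> y) - 2 * lam * (v \<bullet> xt) + (norm (y - xt))\<^sup>2"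
    and step_sq: "(norm (xk - a *\<^sub>R v - xs))\<^sup>2
      = (norm (xk - xs))\<^sup>2 - 2 * a * (v \<bullet> xk) + 2 * a * (v \<bullet> xs) + a\<^sup>2 * (v \<bullet> v)"
    unfolding power2_norm_eq_inner
    by (simp_all add: inner_commute power2_eq_square algebra_simps)
  have "a * (v \<bullet> xk) = A' * (v \<bullet> xt) - Ak * (v \<bullet> yk)"
    using arg_cong[OF xt, of "inner v"] by (simp add: inner_add_right)
  moreover have "(A' / lam) * ((norm (lam *\<^sub>R v + y - xt))\<^sup>2 - (norm (y - xt))\<^sup>2)
      \<le> (A' / lam) * (bnd\<^sup>2 - (norm (y - xt))\<^sup>2)"
    using err assms(1-4) by (intro mult_left_mono diff_right_mono power_mono) auto
  moreover have "(A' / lam) * ((norm (lam *\<^sub>R v + y - xt))\<^sup>2 - (norm (y - xt))\<^sup>2)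
      = A' * lam * (v \<bullet> v) + 2 * A' * (v \<bullet> y) - 2 * A' * (v \<bullet> xt)"
    unfolding err_sq using assms(3) by (simp add: field_simps power2_eq_square)
  moreover have "Ak * (gy + v \<bullet> (yk - y)) \<le> Ak * gyk"
    using tangent_yk assms(1) by (rule mult_left_mono)
  moreover have "a * (gy + v \<bullet> (xs - y)) \<le> a * gxs"
    using tangent_xs assms(2) by (intro mult_left_mono) auto
  ultimately show ?thesis
    using assms(4,5) unfolding step_sq by (simp add: algebra_simps)
qed

lemma relative_error_young:
  fixes \<sigma> r l \<delta> A' a :: real
  assumes "0 \<le> \<sigma>" "\<sigma> < 1" "l > 0" "A' \<ge> 0" "a\<^sup>2 = l * A'"
  shows "(A' / l) * ((\<sigma> * r + l * \<delta>)\<^sup>2 - r\<^sup>2)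
     \<le> - (2 * (1 - \<sigma>\<^sup>2) / 3) * (A' * r\<^sup>2 / l) + (1 + 3 * \<sigma>\<^sup>2 / (1 - \<sigma>\<^sup>2)) * a\<^sup>2 * \<delta>\<^sup>2"
proof -
  define \<tau> where "\<tau> = 1 - \<sigma>\<^sup>2"
  have "\<tau> > 0" unfolding \<tau>_def using power_strict_mono[of \<sigma> 1 2] assms by simp
  have "0 \<le> (\<tau> * r - 3 * \<sigma> * l * \<delta>)\<^sup>2 / (3 * \<tau>)" using \<open>\<tau> > 0\<close> by simp
  also have "\<dots> = (\<tau> / 3) * r\<^sup>2 + 3 * \<sigma>\<^sup>2 * l\<^sup>2 * \<delta>\<^sup>2 / \<tau> - 2 * \<sigma> * r * l * \<delta>"
    using \<open>\<tau> > 0\<close> by (simp add: power2_eq_square field_simps)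
  finally have "(\<sigma> * r + l * \<delta>)\<^sup>2 - r\<^sup>2 \<le> - (2 * \<tau> / 3) * r\<^sup>2 + (1 + 3 * \<sigma>\<^sup>2 / \<tau>) * l\<^sup>2 * \<delta>\<^sup>2"
    using \<open>\<tau> > 0\<close> by (simp add: \<tau>_def power2_eq_square field_simps)
  then have "(A' / l) * ((\<sigma> * r + l * \<delta>)\<^sup>2 - r\<^sup>2)
      \<le> (A' / l) * (- (2 * \<tau> / 3) * r\<^sup>2 + (1 + 3 * \<sigma>\<^sup>2 / \<tau>) * l\<^sup>2 * \<delta>\<^sup>2)"
    using assms by (intro mult_left_mono) auto
  also have "\<dots> = - (2 * \<tau> / 3) * (A' * r\<^sup>2 / l) + (1 + 3 * \<sigma>\<^sup>2 / \<tau>) * (l * A') * \<delta>\<^sup>2"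
    using assms by (simp add: power2_eq_square field_simps)
  finally show ?thesis using assms(5) by (simp add: \<tau>_def)
qed

lemma add_power2_le_power2_add:
  fixes X D D' W t :: real
  assumes "0 \<le> X" "0 \<le> D" "0 \<le> t" "X + D'\<^sup>2 \<le> W\<^sup>2" "0 \<le> D'" "0 \<le> W" "D \<le> D' + t"
  shows "X + D\<^sup>2 \<le> (W + t)\<^sup>2"
proof -
  have "D'\<^sup>2 \<le> W\<^sup>2" using assms(1,4) by linarith
  then have "D' \<le> W" using assms(6) by (rule power2_le_imp_le)
  have "D\<^sup>2 \<le> (D' + t)\<^sup>2" using assms by (intro power_mono) auto
  then have "X + D\<^sup>2 \<le> X + D'\<^sup>2 + 2 * t * D' + t\<^sup>2" by (simp add: power2_eq_square algebra_simps)
  also have "\<dots> \<le> W\<^sup>2 + 2 * t * W + t\<^sup>2"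
    using assms \<open>D' \<le> W\<close> mult_left_mono[OF \<open>D' \<le> W\<close>, of "2 * t"] by linarith
  finally show ?thesis by (simp add: power2_eq_square algebra_simps)
qed

definition acc_residual :: "(nat \<Rightarrow> real) \<Rightarrow> (nat \<Rightarrow> 'a::real_normed_vector) \<Rightarrow> (nat \<Rightarrow> 'a) \<Rightarrow> nat \<Rightarrow> real"
  where "acc_residual lam x y k = norm (y k - acc_xt lam x y (k - 1))"

lemma acc_residual_nonneg: "acc_residual lam x y k \<ge> 0"
  by (simp add: acc_residual_def)

lemma acc_potential_step:
  fixes v y yk xk xk' xt xs :: "'a::real_inner" and \<sigma> \<delta> Ak a A' l gy gyk gxs S W :: real
  defines "r \<equiv> norm (y - xt)" and "c \<equiv> sqrt (1 + 3 * \<sigma>\<^sup>2 / (1 - \<sigma>\<^sup>2))"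
  assumes sigma: "0 \<le> \<sigma>" "\<sigma> < 1" and "0 \<le> \<delta>"
    and step: "Ak \<ge> 0" "a > 0" "l > 0" "A' = Ak + a" "a\<^sup>2 = l * A'"
    and xt: "A' *\<^sub>R xt = Ak *\<^sub>R yk + a *\<^sub>R xk"
    and tangent: "gy + v \<bullet> (yk - y) \<le> gyk" "gy + v \<bullet> (xs - y) \<le> gxs" and "gxs \<le> gy"
    and err: "norm (l *\<^sub>R v + y - xt) \<le> \<sigma> * r + l * \<delta>"
    and x_err: "norm (xk' - (xk - a *\<^sub>R v)) \<le> a * \<delta>"
    and "0 \<le> S" "0 \<le> W"
    and prev: "(norm (xk - xs))\<^sup>2 + 2 * Ak * (gyk - gxs) + (2 * (1 - \<sigma>\<^sup>2) / 3) * S \<le> W\<^sup>2"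
  shows "(norm (xk' - xs))\<^sup>2 + 2 * A' * (gy - gxs) + (2 * (1 - \<sigma>\<^sup>2) / 3) * (S + A' * r\<^sup>2 / l)
    \<le> (W + (1 + c) * a * \<delta>)\<^sup>2"
proof -
  define \<tau> where "\<tau> = 1 - \<sigma>\<^sup>2"
  have "\<tau> > 0" unfolding \<tau>_def using power_strict_mono[of \<sigma> 1 2] sigma by simp
  then have c2: "c\<^sup>2 = 1 + 3 * \<sigma>\<^sup>2 / \<tau>" and "c \<ge> 0" by (simp_all add: c_def \<tau>_def)
  have "(norm (xk - a *\<^sub>R v - xs))\<^sup>2 + 2 * A' * (gy - gxs)
      \<le> (norm (xk - xs))\<^sup>2 + 2 * Ak * (gyk - gxs) + (A' / l) * ((\<sigma> * r + l * \<delta>)\<^sup>2 - r\<^sup>2)"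
    unfolding r_def by (rule estimate_sequence_step[OF step xt tangent err[unfolded r_def]])
  moreover have "(A' / l) * ((\<sigma> * r + l * \<delta>)\<^sup>2 - r\<^sup>2) \<le> - (2 * \<tau> / 3) * (A' * r\<^sup>2 / l) + (c * a * \<delta>)\<^sup>2"
    using relative_error_young[OF sigma \<open>l > 0\<close> _ \<open>a\<^sup>2 = l * A'\<close>, of r \<delta>] step c2
    by (simp add: \<tau>_def power_mult_distrib)
  moreover have "W\<^sup>2 + (c * a * \<delta>)\<^sup>2 \<le> (W + c * a * \<delta>)\<^sup>2"
    using \<open>c \<ge> 0\<close> \<open>0 \<le> W\<close> \<open>a > 0\<close> \<open>0 \<le> \<delta>\<close> by (simp add: power2_eq_square algebra_simps)
  ultimately have before_x_err: "2 * A' * (gy - gxs) + (2 * \<tau> / 3) * S + (2 * \<tau> / 3) * (A' * r\<^sup>2 / l)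
      + (norm (xk - a *\<^sub>R v - xs))\<^sup>2 \<le> (W + c * a * \<delta>)\<^sup>2"
    using prev unfolding \<tau>_def by linarith
  have x_dist: "norm (xk' - xs) \<le> norm (xk - a *\<^sub>R v - xs) + a * \<delta>"
    using norm_triangle_ineq[of "xk - a *\<^sub>R v - xs" "xk' - (xk - a *\<^sub>R v)"] x_err by simp
  have "2 * A' * (gy - gxs) + (2 * \<tau> / 3) * S + (2 * \<tau> / 3) * (A' * r\<^sup>2 / l)
      + (norm (xk' - xs))\<^sup>2 \<le> (W + c * a * \<delta> + a * \<delta>)\<^sup>2"
    using step \<open>0 \<le> \<delta>\<close> \<open>gxs \<le> gy\<close> \<open>0 \<le> S\<close> \<open>0 \<le> W\<close> \<open>\<tau> > 0\<close> \<open>c \<ge> 0\<close>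
    by (intro add_power2_le_power2_add[OF _ _ _ before_x_err _ _ x_dist]) simp_all
  also have "W + c * a * \<delta> + a * \<delta> = W + (1 + c) * a * \<delta>" by (simp add: algebra_simps)
  finally show ?thesis unfolding \<tau>_def by (simp add: distrib_left)
qed

text \<open>The square root of the left-hand side grows by at most \<open>(1 + c) a\<^sub>k\<^sub>+\<^sub>1 \<delta>\<close> per step,
  \<open>c\<close> being the square root on the right: \<open>c a\<^sub>k\<^sub>+\<^sub>1 \<delta>\<close> from the inexact proximal step and
  \<open>a\<^sub>k\<^sub>+\<^sub>1 \<delta>\<close> from the inexact update of \<open>x\<close>.\<close>
lemma acc_potential_bound:
  fixes g :: "'a::euclidean_space \<Rightarrow> real" and G :: "'a \<Rightarrow> 'a"
  assumes "0 \<le> \<sigma>" "\<sigma> < 1" "0 \<le> \<delta>"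
    and convex: "convex_on UNIV g"
    and grad: "\<forall>z. (g has_derivative (\<lambda>h. G z \<bullet> h)) (at z)"
    and minimizer: "\<forall>z. g xs \<le> g z"
    and framework: "acc_framework G \<sigma> \<delta> K lam x y"
    and "k \<le> K"
  shows "(norm (x k - xs))\<^sup>2 + 2 * acc_A lam k * (g (y k) - g xs)
      + (2 * (1 - \<sigma>\<^sup>2) / 3) * (\<Sum>i\<in>{1..k}. acc_A lam i * (acc_residual lam x y i)\<^sup>2 / lam i)
      \<le> (norm xs + (1 + sqrt (1 + 3 * \<sigma>\<^sup>2 / (1 - \<sigma>\<^sup>2))) * \<delta> * acc_A lam k)\<^sup>2"
  using \<open>k \<le> K\<close>
proof (induction k)
  case 0
  then show ?case using framework by (simp add: acc_framework_def)
next
  case (Suc k)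
  define c where "c = sqrt (1 + 3 * \<sigma>\<^sup>2 / (1 - \<sigma>\<^sup>2))"
  define A A' a l where "A = acc_A lam k" and "A' = acc_A lam (Suc k)"
    and "a = acc_a lam (Suc k)" and "l = lam (Suc k)"
  define v xt where "v = G (y (Suc k))" and "xt = acc_xt lam x y k"
  have pos: "\<forall>i\<in>{1..K}. lam i > 0" using framework by (simp add: acc_framework_def)
  have "l > 0" "A \<ge> 0" using pos Suc.prems by (auto simp: l_def A_def intro!: acc_A_nonneg)
  then have "a > 0" and A': "A' = A + a" and "a\<^sup>2 = l * A'"
    by (simp_all add: a_def A_def A'_def l_def acc_a_pos acc_A_Suc acc_a_squared)
  have "A' *\<^sub>R xt = A *\<^sub>R y k + a *\<^sub>R x k"
    using \<open>A \<ge> 0\<close> \<open>a > 0\<close> unfolding xt_def acc_xt_def A_def[symmetric] A'_def[symmetric] a_def[symmetric]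
    by (simp add: A' scaleR_add_right)
  moreover have "norm (l *\<^sub>R v + y (Suc k) - xt) \<le> \<sigma> * norm (y (Suc k) - xt) + l * \<delta>"
    and "norm (x (Suc k) - (x k - a *\<^sub>R v)) \<le> a * \<delta>"
    using framework Suc.prems by (auto simp: acc_framework_def l_def v_def xt_def a_def)
  moreover have "g (y (Suc k)) + v \<bullet> (z - y (Suc k)) \<le> g z" for z
    unfolding v_def by (rule convex_on_gradient_inequality[OF convex grad[rule_format]])
  moreover have "0 \<le> (\<Sum>i\<in>{1..k}. acc_A lam i * (acc_residual lam x y i)\<^sup>2 / lam i)"
    using pos Suc.prems by (intro sum_nonneg divide_nonneg_pos mult_nonneg_nonneg acc_A_nonneg) auto
  moreover have "0 \<le> norm xs + (1 + c) * \<delta> * A"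
    using \<open>A \<ge> 0\<close> \<open>0 \<le> \<delta>\<close> power_le_one[OF assms(1) less_imp_le[OF assms(2)], of 2]
    by (simp add: c_def)
  ultimately have "(norm (x (Suc k) - xs))\<^sup>2 + 2 * A' * (g (y (Suc k)) - g xs)
      + (2 * (1 - \<sigma>\<^sup>2) / 3) * ((\<Sum>i\<in>{1..k}. acc_A lam i * (acc_residual lam x y i)\<^sup>2 / lam i)
        + A' * (norm (y (Suc k) - xt))\<^sup>2 / l)
      \<le> (norm xs + (1 + c) * \<delta> * A + (1 + c) * a * \<delta>)\<^sup>2"
    using assms(1-3) \<open>A \<ge> 0\<close> \<open>a > 0\<close> \<open>l > 0\<close> A' \<open>a\<^sup>2 = l * A'\<close> minimizer Suc
    unfolding c_def A_def by (intro acc_potential_step) auto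
  also have "\<dots> = (norm xs + (1 + c) * \<delta> * A')\<^sup>2"
    by (simp add: A' algebra_simps)
  finally show ?case
    by (simp add: A'_def l_def xt_def c_def acc_residual_def distrib_left)
qed

lemma inverse_power2_ge_tangent:
  fixes a t :: real
  assumes "a > 0" "t > 0"
  shows "3 / t\<^sup>2 - 2 * a / t ^ 3 \<le> 1 / a\<^sup>2"
proof -
  have "1 / a\<^sup>2 - (3 / t\<^sup>2 - 2 * a / t ^ 3) = (t - a)\<^sup>2 * (t + 2 * a) / (a\<^sup>2 * t ^ 3)"
    using assms by (simp add: field_simps power2_eq_square power3_eq_cube)
  also have "\<dots> \<ge> 0" using assms by simp
  finally show ?thesis by simp
qed

text \<open>Convexity of \<open>1/a\<^sup>2\<close>, via its tangent at the mean \<open>S / card B\<close>.\<close>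
lemma card_cube_le_sum_inverse_power2:
  fixes a :: "'i \<Rightarrow> real"
  assumes "finite B" "B \<noteq> {}" "\<forall>i\<in>B. a i > 0" "sum a B \<le> S"
  shows "real (card B) ^ 3 / S\<^sup>2 \<le> (\<Sum>i\<in>B. 1 / (a i)\<^sup>2)"
proof -
  define b where "b = real (card B)"
  have "b > 0" using assms(1,2) by (simp add: b_def card_gt_0_iff)
  have "S > 0" using sum_pos[OF assms(1,2)] assms(3,4) by force
  define t where "t = S / b"
  have "t > 0" using \<open>b > 0\<close> \<open>S > 0\<close> by (simp add: t_def)
  have "b ^ 3 / S\<^sup>2 = 3 * b / t\<^sup>2 - 2 * S / t ^ 3"
    using \<open>b > 0\<close> \<open>S > 0\<close> by (simp add: t_def field_simps power2_eq_square power3_eq_cube)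
  also have "\<dots> \<le> 3 * b / t\<^sup>2 - 2 * sum a B / t ^ 3"
    using assms(4) \<open>t > 0\<close> by (simp add: divide_right_mono)
  also have "\<dots> = (\<Sum>i\<in>B. 3 / t\<^sup>2 - 2 * a i / t ^ 3)"
    by (simp add: b_def sum_subtractf sum_divide_distrib[symmetric] sum_distrib_left[symmetric])
  also have "\<dots> \<le> (\<Sum>i\<in>B. 1 / (a i)\<^sup>2)"
    using assms(3) \<open>t > 0\<close> by (intro sum_mono inverse_power2_ge_tangent) auto
  finally show ?thesis by (simp add: b_def)
qed

lemma geometric_growth:
  fixes f :: "nat \<Rightarrow> real"
  assumes "c \<ge> 0" "\<forall>i. s \<le> i \<and> i + n \<le> k \<longrightarrow> c * f i \<le> f (i + n)" "s + J * n \<le> k"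
  shows "c ^ J * f s \<le> f (s + J * n)"
  using assms(3)
proof (induction J)
  case (Suc J)
  then have "c ^ Suc J * f s \<le> c * f (s + J * n)"
    using assms(1) by (simp add: mult.assoc mult_left_mono)
  also have "\<dots> \<le> f (s + Suc J * n)"
    using assms(2)[rule_format, of "s + J * n"] Suc.prems by (simp add: algebra_simps)
  finally show ?case .
qed simp

lemma double_add_two_le_of_cube_le:
  fixes b N :: nat
  assumes "3 \<le> N" "256 * b ^ 3 \<le> 9 * N ^ 3"
  shows "2 * b + 2 \<le> N"
proof (rule ccontr)
  assume "\<not> ?thesis"
  then have "N \<le> 2 * b + 1" by simp
  then have "N ^ 3 \<le> (2 * b + 1) ^ 3" by (rule power_mono) simp
  moreover have "(2 * b + 1) ^ 3 = 8 * b ^ 3 + 12 * b\<^sup>2 + 6 * b + 1"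
    by (simp add: power3_eq_cube power2_eq_square algebra_simps)
  moreover have "b\<^sup>2 \<le> b ^ 3" "b \<le> b ^ 3" "1 \<le> b ^ 3"
    using \<open>N \<le> 2 * b + 1\<close> assms(1) by (auto simp: power2_eq_square power3_eq_cube)
  ultimately show False using assms(2) by linarith
qed

text \<open>With \<open>u = 1 - \<alpha>\<close> one has \<open>1 - \<sigma>\<^sup>2 = u(4 - u)/4\<close>, so the square root times
  \<open>sqrt u\<close> is at most \<open>sqrt 5 < 56/25\<close>.\<close>
lemma relative_error_constant_le:
  fixes \<alpha> \<sigma> :: real
  assumes "0 \<le> \<alpha>" "\<alpha> < 1" "\<sigma> = (1 + \<alpha>) / 2"
  shows "(1 + sqrt (1 + 3 * \<sigma>\<^sup>2 / (1 - \<sigma>\<^sup>2))) * sqrt (1 - \<alpha>) \<le> 81 / 25"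
proof -
  define u c where "u = 1 - \<alpha>" and "c = sqrt (1 + 3 * \<sigma>\<^sup>2 / (1 - \<sigma>\<^sup>2))"
  have u: "0 < u" "u \<le> 1" using assms by (auto simp: u_def)
  have \<sigma>: "\<sigma> = 1 - u / 2" using assms(3) by (simp add: u_def field_simps)
  have \<tau>: "1 - \<sigma>\<^sup>2 = u * (4 - u) / 4" unfolding \<sigma> by (simp add: power2_eq_square field_simps)
  have "\<sigma>\<^sup>2 \<le> 1" using \<sigma> u by (simp add: power_le_one)
  have "c\<^sup>2 = 1 + 3 * \<sigma>\<^sup>2 / (1 - \<sigma>\<^sup>2)" unfolding c_def using u by (simp add: \<tau>)
  then have "c\<^sup>2 * u = u + 12 * \<sigma>\<^sup>2 / (4 - u)"
    using u unfolding \<tau> by (simp add: field_simps)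
  also have "\<dots> \<le> 1 + 12 * 1 / 3"
    using \<open>\<sigma>\<^sup>2 \<le> 1\<close> u frac_le[of "12 * 1" "12 * \<sigma>\<^sup>2" 3 "4 - u"] by simp
  moreover have "(c * sqrt u)\<^sup>2 = c\<^sup>2 * u" using u by (simp add: power_mult_distrib)
  ultimately have "(c * sqrt u)\<^sup>2 \<le> (56 / 25)\<^sup>2" by (simp add: power2_eq_square)
  then have "c * sqrt u \<le> 56 / 25" by (rule power2_le_imp_le) simp
  moreover have "sqrt u \<le> 1" using u by simp
  ultimately show ?thesis
    using distrib_right[of 1 c "sqrt u"] unfolding u_def c_def by linarith
qed

lemma residual_sum_le:
  fixes \<alpha> \<sigma> \<mu> \<delta> AK \<xi> S :: real
  assumes alpha: "0 \<le> \<alpha>" "\<alpha> < 1" and sigma: "\<sigma> = (1 + \<alpha>) / 2"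
    and mu: "\<mu> = 8 / sqrt (1 - \<alpha>)" and "0 \<le> \<delta>" "AK > 0" "\<xi> \<ge> 0"
    and delta_small: "\<delta> \<le> \<xi> / (\<mu> * AK)"
    and S: "(2 * (1 - \<sigma>\<^sup>2) / 3) * S \<le> (\<xi> + (1 + sqrt (1 + 3 * \<sigma>\<^sup>2 / (1 - \<sigma>\<^sup>2))) * \<delta> * AK)\<^sup>2"
  shows "S \<le> (\<mu> * \<xi> / 4)\<^sup>2"
proof -
  define u \<tau> c where "u = 1 - \<alpha>" and "\<tau> = 1 - \<sigma>\<^sup>2" and "c = sqrt (1 + 3 * \<sigma>\<^sup>2 / \<tau>)"
  have u: "0 < u" "u \<le> 1" using alpha by (auto simp: u_def)
  have tau: "\<tau> = u * (4 - u) / 4" unfolding \<tau>_def sigma u_def by (simp add: power2_eq_square field_simps)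
  have "\<tau> > 0" unfolding tau using u by simp
  have "\<delta> * AK \<le> \<xi> / (\<mu> * AK) * AK" using delta_small \<open>AK > 0\<close> by (intro mult_right_mono) auto
  also have "\<dots> = \<xi> * sqrt u / 8" using \<open>AK > 0\<close> mu by (simp add: u_def)
  finally have "(1 + c) * (\<delta> * AK) \<le> (1 + c) * (\<xi> * sqrt u / 8)"
    unfolding c_def using \<open>\<tau> > 0\<close> by (intro mult_left_mono) auto
  also have "\<dots> = ((1 + c) * sqrt u) * \<xi> / 8" by simp
  also have "\<dots> \<le> (81 / 25) * \<xi> / 8"
    using relative_error_constant_le[OF alpha sigma] \<open>\<xi> \<ge> 0\<close>
    by (intro divide_right_mono mult_right_mono) (simp_all add: c_def \<tau>_def u_def)
  finally have "(1 + c) * \<delta> * AK \<le> 81 / 200 * \<xi>" by simp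
  moreover have "(1 + c) * \<delta> * AK \<ge> 0"
    unfolding c_def using \<open>\<tau> > 0\<close> \<open>0 \<le> \<delta>\<close> \<open>AK > 0\<close> by simp
  moreover have "(2 * \<tau> / 3) * S \<le> (\<xi> + (1 + c) * \<delta> * AK)\<^sup>2"
    using S unfolding c_def \<tau>_def .
  ultimately have "(2 * \<tau> / 3) * S \<le> (281 / 200 * \<xi>)\<^sup>2"
    using \<open>\<xi> \<ge> 0\<close> power_mono[of "\<xi> + (1 + c) * \<delta> * AK" "281 / 200 * \<xi>" 2] by linarith
  then have "S \<le> (3 / (2 * \<tau>) * (281 / 200)\<^sup>2) * \<xi>\<^sup>2"
    using \<open>\<tau> > 0\<close> by (simp add: field_simps)
  also have "\<dots> \<le> (4 / u) * \<xi>\<^sup>2"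
  proof (rule mult_right_mono)
    show "3 / (2 * \<tau>) * (281 / 200)\<^sup>2 \<le> 4 / u"
      unfolding tau using u by (simp add: field_simps power2_eq_square)
  qed simp
  also have "\<dots> = (\<mu> * \<xi> / 4)\<^sup>2" using mu u by (simp add: u_def power_mult_distrib power_divide)
  finally show ?thesis .
qed

lemma step_size_lower_bound:
  fixes \<omega> :: "real \<Rightarrow> real"
  assumes "\<forall>t\<ge>0. \<omega> t > 0" "mono_on {0..} \<omega>" "1 / (2 * \<omega> r) \<le> l" "0 \<le> r" "r \<le> t"
  shows "1 / (2 * \<omega> t) \<le> l"
proof -
  have "\<omega> r \<le> \<omega> t" using assms(2,4,5) by (auto elim: mono_onD)
  then have "1 / (2 * \<omega> t) \<le> 1 / (2 * \<omega> r)" using assms(1,4) by (intro divide_left_mono) auto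
  then show ?thesis using assms(3) by linarith
qed

lemma weighted_residual_nonneg:
  "\<forall>i\<in>{1..k}. lam i > 0 \<Longrightarrow> i \<in> {1..k} \<Longrightarrow> 0 \<le> acc_A lam i * (r i)\<^sup>2 / lam i"
  by (intro divide_nonneg_pos mult_nonneg_nonneg acc_A_nonneg) auto

lemma weighted_residual_sum_mono:
  assumes "\<forall>i\<in>{1..k}. lam i > 0" "B \<subseteq> {1..k}"
  shows "(\<Sum>i\<in>B. acc_A lam i * (r i)\<^sup>2 / lam i) \<le> (\<Sum>i\<in>{1..k}. acc_A lam i * (r i)\<^sup>2 / lam i)"
  using assms weighted_residual_nonneg[OF assms(1)] by (intro sum_mono2) auto

lemma acc_A_ge_first_step:
  fixes lam r :: "nat \<Rightarrow> real" and \<omega> :: "real \<Rightarrow> real"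
  assumes pos: "\<forall>i\<in>{1..k}. lam i > 0" and "1 \<le> i" "i \<le> k"
    and "0 \<le> r 1" "0 \<le> \<Theta>" "\<Theta> \<le> t"
    and budget: "(\<Sum>i\<in>{1..k}. acc_A lam i * (r i)\<^sup>2 / lam i) \<le> \<Theta>\<^sup>2"
    and omega_pos: "\<forall>t\<ge>0. \<omega> t > 0" and omega_mono: "mono_on {0..} \<omega>"
    and lam_lower: "\<forall>i\<in>{1..k}. 1 / (2 * \<omega> (r i)) \<le> lam i"
  shows "1 / (2 * \<omega> t) \<le> acc_A lam i"
proof -
  have "1 \<in> {1..k}" using assms(2,3) by simp
  then have "lam 1 > 0" using pos by blast
  then have "(r 1)\<^sup>2 = (\<Sum>i\<in>{1}. acc_A lam i * (r i)\<^sup>2 / lam i)" using acc_A_1 by simp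
  also have "\<dots> \<le> \<Theta>\<^sup>2"
    using weighted_residual_sum_mono[OF pos, of "{1}" r] \<open>1 \<in> {1..k}\<close> budget by simp
  finally have "r 1 \<le> t" using \<open>0 \<le> \<Theta>\<close> \<open>\<Theta> \<le> t\<close> power2_le_imp_le by fastforce
  then have "1 / (2 * \<omega> t) \<le> lam 1"
    using lam_lower \<open>1 \<in> {1..k}\<close> \<open>0 \<le> r 1\<close>
    by (blast intro: step_size_lower_bound[OF omega_pos omega_mono])
  also have "\<dots> = acc_A lam 1" using \<open>lam 1 > 0\<close> acc_A_1[of lam] by simp
  also have "\<dots> \<le> acc_A lam i" using pos assms(2,3) by (rule acc_A_mono)
  finally show ?thesis .
qed

text \<open>If \<open>A\<close> less than quadruples over the block \<open>I = {j+1..j+n}\<close>, then \<open>\<Sum>\<^sub>I a\<^sub>i < 3A\<^sub>j\<close>,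
  and on the block \<open>A\<^sub>i r\<^sub>i\<^sup>2/\<lambda>\<^sub>i = A\<^sub>i\<^sup>2 r\<^sub>i\<^sup>2/a\<^sub>i\<^sup>2 \<ge> A\<^sub>j\<^sup>2 r\<^sub>i\<^sup>2/a\<^sub>i\<^sup>2\<close>; so \<open>b\<close> residuals
  above \<open>\<theta>\<close> cost at least \<open>\<theta>\<^sup>2 b\<^sup>3/9\<close> of the budget.\<close>
lemma few_large_residuals:
  fixes lam r :: "nat \<Rightarrow> real" and j n k :: nat and \<theta> \<Theta> :: real
  defines "B \<equiv> {i \<in> {Suc j..j + n}. \<theta> < r i}"
  assumes pos: "\<forall>i\<in>{1..k}. lam i > 0" and "1 \<le> j" "j + n \<le> k"
    and stall: "acc_A lam (j + n) < 4 * acc_A lam j" and "0 \<le> \<theta>"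
    and budget: "(\<Sum>i\<in>{1..k}. acc_A lam i * (r i)\<^sup>2 / lam i) \<le> \<Theta>\<^sup>2"
    and "B \<noteq> {}"
  shows "\<theta>\<^sup>2 * real (card B) ^ 3 < 9 * \<Theta>\<^sup>2"
proof -
  define A a where "A = acc_A lam" and "a = acc_a lam"
  have B_sub: "B \<subseteq> {Suc j..j + n}" "B \<subseteq> {1..k}" "finite B"
    using \<open>j + n \<le> k\<close> by (auto simp: B_def intro: finite_subset)
  have "A j > 0" using pos \<open>1 \<le> j\<close> \<open>j + n \<le> k\<close> by (auto simp: A_def intro!: acc_A_pos)
  have a_props: "a i > 0" "(a i)\<^sup>2 = lam i * A i" "A j \<le> A i" "lam i > 0" if iI: "i \<in> {Suc j..j + n}" for i
  proof -
    obtain i' where i': "i = Suc i'" "j \<le> i'" "i \<le> k"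
      using iI \<open>j + n \<le> k\<close> by (cases i) auto
    have "lam (Suc i') > 0" "acc_A lam i' \<ge> 0" using pos i' by (auto intro!: acc_A_nonneg)
    then show "a i > 0" "(a i)\<^sup>2 = lam i * A i" "lam i > 0"
      using i' by (simp_all add: a_def A_def acc_a_pos acc_a_squared)
    show "A j \<le> A i" using pos i' by (simp add: A_def acc_A_mono)
  qed
  have "sum a B \<le> (\<Sum>i\<in>{Suc j..j + n}. a i)"
    using B_sub(1) a_props(1) by (intro sum_mono2) (auto intro: less_imp_le)
  also have "\<dots> \<le> 3 * A j" using stall by (simp add: a_def A_def sum_acc_a)
  finally have "real (card B) ^ 3 / (3 * A j)\<^sup>2 \<le> (\<Sum>i\<in>B. 1 / (a i)\<^sup>2)"
    using B_sub \<open>B \<noteq> {}\<close> a_props(1) by (intro card_cube_le_sum_inverse_power2) auto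
  then have "(A j)\<^sup>2 * \<theta>\<^sup>2 * (real (card B) ^ 3 / (3 * A j)\<^sup>2)
      \<le> (A j)\<^sup>2 * \<theta>\<^sup>2 * (\<Sum>i\<in>B. 1 / (a i)\<^sup>2)"
    by (rule mult_left_mono) simp
  moreover have "(A j)\<^sup>2 * \<theta>\<^sup>2 * (real (card B) ^ 3 / (3 * A j)\<^sup>2) = \<theta>\<^sup>2 * real (card B) ^ 3 / 9"
    using \<open>A j > 0\<close> by (simp add: field_simps)
  ultimately have "\<theta>\<^sup>2 * real (card B) ^ 3 / 9 \<le> (\<Sum>i\<in>B. (A j)\<^sup>2 * \<theta>\<^sup>2 / (a i)\<^sup>2)"
    by (simp add: sum_distrib_left)
  also have "\<dots> < (\<Sum>i\<in>B. A i * (r i)\<^sup>2 / lam i)"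
  proof (rule sum_strict_mono[OF B_sub(3) \<open>B \<noteq> {}\<close>])
    fix i assume "i \<in> B"
    note i = a_props[OF subsetD[OF B_sub(1) this]]
    have "\<theta>\<^sup>2 < (r i)\<^sup>2" using \<open>i \<in> B\<close> \<open>0 \<le> \<theta>\<close> by (auto simp: B_def intro!: power_strict_mono)
    then have "(A j)\<^sup>2 * \<theta>\<^sup>2 < (A i)\<^sup>2 * (r i)\<^sup>2"
      using i(3) \<open>A j > 0\<close> by (intro mult_le_less_imp_less power_mono) auto
    then have "(A j)\<^sup>2 * \<theta>\<^sup>2 / (a i)\<^sup>2 < (A i)\<^sup>2 * (r i)\<^sup>2 / (a i)\<^sup>2"
      using i(1) by (simp add: divide_strict_right_mono)
    also have "\<dots> = A i * (r i)\<^sup>2 / lam i"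
      using i(1,2,4) \<open>A j > 0\<close> by (simp add: field_simps power2_eq_square)
    finally show "(A j)\<^sup>2 * \<theta>\<^sup>2 / (a i)\<^sup>2 < A i * (r i)\<^sup>2 / lam i" .
  qed
  also have "\<dots> \<le> \<Theta>\<^sup>2"
    using weighted_residual_sum_mono[OF pos B_sub(2), of r] budget by (simp add: A_def)
  finally show ?thesis by simp
qed

text \<open>After a block of \<open>n \<ge> m - 1\<close> steps on which \<open>A\<close> less than quadruples, fewer than half of
  the residuals exceed \<open>\<theta> = 16\<Theta>/m\<^sup>3\<^sup>/\<^sup>2\<close>; at the others \<open>\<lambda>\<^sub>i \<ge> 1/(2\<omega>(\<theta>))\<close>, and each of them
  raises \<open>sqrt A\<close> by \<open>sqrt \<lambda>\<^sub>i / 2\<close>.\<close>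
lemma acc_A_after_stall:
  fixes lam r :: "nat \<Rightarrow> real" and \<omega> :: "real \<Rightarrow> real" and j n k :: nat and \<Theta> m :: real
  assumes pos: "\<forall>i\<in>{1..k}. lam i > 0" and r_nonneg: "\<forall>i. 0 \<le> r i" and "0 \<le> \<Theta>"
    and budget: "(\<Sum>i\<in>{1..k}. acc_A lam i * (r i)\<^sup>2 / lam i) \<le> \<Theta>\<^sup>2"
    and omega_pos: "\<forall>t\<ge>0. \<omega> t > 0" and omega_mono: "mono_on {0..} \<omega>"
    and lam_lower: "\<forall>i\<in>{1..k}. 1 / (2 * \<omega> (r i)) \<le> lam i"
    and "1 \<le> j" "j + n \<le> k" and stall: "acc_A lam (j + n) < 4 * acc_A lam j"
    and "2 < m" "m \<le> real n + 1"
  shows "m\<^sup>2 / (32 * \<omega> (16 * \<Theta> / m powr (3/2))) \<le> acc_A lam (j + n)"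
proof -
  define \<theta> where "\<theta> = 16 * \<Theta> / m powr (3/2)"
  define B where "B = {i \<in> {Suc j..j + n}. \<theta> < r i}"
  define ell where "ell = 1 / (2 * \<omega> \<theta>)"
  have "0 \<le> \<theta>" using \<open>0 \<le> \<Theta>\<close> by (simp add: \<theta>_def)
  have "ell > 0" using omega_pos \<open>0 \<le> \<theta>\<close> by (simp add: ell_def)
  have B_card: "2 * card B + 2 \<le> n + 1"
  proof (cases "B = {}")
    case True
    then show ?thesis using \<open>2 < m\<close> \<open>m \<le> real n + 1\<close> by simp
  next
    case False
    have "(m powr (3/2))\<^sup>2 = m ^ 3"
      using \<open>2 < m\<close> by (simp add: power2_eq_square powr_add[symmetric] powr_realpow)
    then have \<theta>_sq: "\<theta>\<^sup>2 * m ^ 3 = 256 * \<Theta>\<^sup>2"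
      using \<open>2 < m\<close> by (simp add: \<theta>_def power_divide power_mult_distrib)
    have "\<theta>\<^sup>2 * real (card B) ^ 3 < 9 * \<Theta>\<^sup>2"
      unfolding B_def using pos \<open>1 \<le> j\<close> \<open>j + n \<le> k\<close> stall \<open>0 \<le> \<theta>\<close> budget False
      by (intro few_large_residuals) (auto simp: B_def)
    then have "(\<theta>\<^sup>2 * m ^ 3) * real (card B) ^ 3 < \<Theta>\<^sup>2 * (9 * m ^ 3)"
      using \<open>2 < m\<close> mult_strict_right_mono[of _ _ "m ^ 3"] by (simp add: ac_simps)
    then have "\<Theta>\<^sup>2 * (256 * real (card B) ^ 3) < \<Theta>\<^sup>2 * (9 * m ^ 3)"
      unfolding \<theta>_sq by (simp add: ac_simps)
    then have "256 * real (card B) ^ 3 < 9 * m ^ 3"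
      using zero_le_power2[of \<Theta>] by (rule mult_left_less_imp_less)
    also have "\<dots> \<le> 9 * (real n + 1) ^ 3"
      using \<open>2 < m\<close> \<open>m \<le> real n + 1\<close> by (intro mult_left_mono power_mono) auto
    finally have "real (256 * card B ^ 3) < real (9 * (n + 1) ^ 3)" by (simp add: add.commute)
    then have "256 * card B ^ 3 \<le> 9 * (n + 1) ^ 3" by (simp only: of_nat_less_iff less_imp_le)
    moreover have "3 \<le> n + 1" using \<open>2 < m\<close> \<open>m \<le> real n + 1\<close> by simp
    ultimately show ?thesis by (intro double_add_two_le_of_cube_le)
  qed
  have "B \<subseteq> {Suc j..j + n}" by (auto simp: B_def)
  then have "card ({Suc j..j + n} - B) = n - card B"
    by (simp add: card_Diff_subset finite_subset)
  then have "real (card ({Suc j..j + n} - B)) = real n - real (card B)"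
    using B_card by simp
  moreover have "2 * real (card B) + 2 \<le> real n + 1"
    using of_nat_mono[OF B_card, where ?'a = real] by simp
  ultimately have "m / 2 \<le> real (card ({Suc j..j + n} - B))"
    using \<open>m \<le> real n + 1\<close> by linarith
  have good: "sqrt ell \<le> sqrt (lam i)" if "i \<in> {Suc j..j + n} - B" for i
  proof -
    have "i \<in> {1..k}" "r i \<le> \<theta>" using that \<open>j + n \<le> k\<close> by (auto simp: B_def)
    then have "ell \<le> lam i"
      unfolding ell_def using lam_lower r_nonneg
      by (blast intro: step_size_lower_bound[OF omega_pos omega_mono])
    then show ?thesis by simp
  qed
  have "m / 2 * sqrt ell \<le> (\<Sum>i\<in>{Suc j..j + n} - B. sqrt ell)"
    using \<open>m / 2 \<le> real (card ({Suc j..j + n} - B))\<close> \<open>ell > 0\<close> by (simp add: mult_right_mono)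
  also have "\<dots> \<le> (\<Sum>i\<in>{Suc j..j + n} - B. sqrt (lam i))"
    using good by (rule sum_mono)
  also have "\<dots> \<le> (\<Sum>i\<in>{Suc j..j + n}. sqrt (lam i))"
    using pos \<open>j + n \<le> k\<close> by (intro sum_mono2) (auto intro: less_imp_le)
  also have "\<dots> \<le> 2 * sqrt (acc_A lam (j + n))"
  proof -
    have "\<forall>i\<in>{1..j + n}. lam i > 0" using pos \<open>j + n \<le> k\<close> by auto
    moreover from this have "0 \<le> sqrt (acc_A lam j)" using acc_A_nonneg[of j lam] by simp
    ultimately show ?thesis using sqrt_acc_A_add_ge[of j n lam] by linarith
  qed
  finally have "(m / 4 * sqrt ell)\<^sup>2 \<le> (sqrt (acc_A lam (j + n)))\<^sup>2"
    using \<open>2 < m\<close> \<open>ell > 0\<close> by (intro power_mono) auto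
  also have "\<dots> = acc_A lam (j + n)"
    using acc_A_nonneg[of "j + n" lam] pos \<open>j + n \<le> k\<close> by simp
  finally show ?thesis
    using \<open>ell > 0\<close> by (simp add: ell_def \<theta>_def power_mult_distrib power_divide)
qed

text \<open>Either \<open>A\<close> quadruples on each of \<open>J\<close> consecutive blocks of length \<open>\<lceil>k/J\<rceil> - 1\<close>, or some
  block stalls and \<open>acc_A_after_stall\<close> applies with \<open>m = k/J\<close>.\<close>
lemma acc_A_growth:
  fixes lam r :: "nat \<Rightarrow> real" and \<omega> :: "real \<Rightarrow> real" and k J :: nat and \<Theta> :: real
  assumes pos: "\<forall>i\<in>{1..k}. lam i > 0" and r_nonneg: "\<forall>i. 0 \<le> r i" and "0 \<le> \<Theta>"
    and budget: "(\<Sum>i\<in>{1..k}. acc_A lam i * (r i)\<^sup>2 / lam i) \<le> \<Theta>\<^sup>2"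
    and omega_pos: "\<forall>t\<ge>0. \<omega> t > 0" and omega_mono: "mono_on {0..} \<omega>"
    and lam_lower: "\<forall>i\<in>{1..k}. 1 / (2 * \<omega> (r i)) \<le> lam i"
    and "0 < J" "2 * J < k"
  shows "min (4 ^ J / (2 * \<omega> \<Theta>))
      ((real k / real J)\<^sup>2 / (32 * \<omega> (16 * \<Theta> / (real k / real J) powr (3/2)))) \<le> acc_A lam k"
proof -
  define m where "m = real k / real J"
  define n where "n = nat \<lceil>m\<rceil> - 1"
  have "2 < m" using \<open>0 < J\<close> \<open>2 * J < k\<close> by (simp add: m_def field_simps)
  then have "m \<le> real n + 1" "real n < m" by (simp_all add: n_def) linarith+
  then have "J * n < k" using \<open>0 < J\<close> by (simp add: m_def field_simps flip: of_nat_mult of_nat_less_iff)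
  have "1 \<le> k" using \<open>2 * J < k\<close> by simp
  have mono: "acc_A lam i \<le> acc_A lam i'" if "i \<le> i'" "i' \<le> k" for i i'
    using pos that by (rule acc_A_mono)
  have first: "1 / (2 * \<omega> \<Theta>) \<le> acc_A lam 1"
    using \<open>1 \<le> k\<close> r_nonneg \<open>0 \<le> \<Theta>\<close>
    by (intro acc_A_ge_first_step[OF pos _ _ _ _ _ budget omega_pos omega_mono lam_lower]) auto
  show ?thesis
  proof (cases "\<exists>j. 1 \<le> j \<and> j + n \<le> k \<and> acc_A lam (j + n) < 4 * acc_A lam j")
    case True
    then obtain j where "1 \<le> j" "j + n \<le> k" "acc_A lam (j + n) < 4 * acc_A lam j" by blast
    with assms \<open>2 < m\<close> \<open>m \<le> real n + 1\<close>
    have "m\<^sup>2 / (32 * \<omega> (16 * \<Theta> / m powr (3/2))) \<le> acc_A lam (j + n)"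
      by (intro acc_A_after_stall) auto
    also have "\<dots> \<le> acc_A lam k" using \<open>j + n \<le> k\<close> by (rule mono) simp
    finally show ?thesis by (simp add: m_def min_le_iff_disj)
  next
    case False
    then have "4 ^ J * acc_A lam 1 \<le> acc_A lam (1 + J * n)"
      using \<open>J * n < k\<close> by (intro geometric_growth[where k = k]) (auto simp: not_less)
    also have "\<dots> \<le> acc_A lam k" using \<open>J * n < k\<close> by (intro mono) auto
    finally have "4 ^ J * (1 / (2 * \<omega> \<Theta>)) \<le> acc_A lam k"
      using first mult_left_mono[OF first, of "4 ^ J"] by simp
    then show ?thesis by (simp add: min_le_iff_disj)
  qed
qed

lemma acc_residual_budget:
  fixes g :: "'a::euclidean_space \<Rightarrow> real" and G :: "'a \<Rightarrow> 'a"
  assumes "0 \<le> \<alpha>" "\<alpha> < 1" "\<sigma> = (1 + \<alpha>) / 2" "\<mu> = 8 / sqrt (1 - \<alpha>)"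
    and convex: "convex_on UNIV g"
    and grad: "\<forall>z. (g has_derivative (\<lambda>h. G z \<bullet> h)) (at z)"
    and minimizer: "\<forall>z. g xs \<le> g z"
    and "0 \<le> \<delta>" "1 \<le> K"
    and framework: "acc_framework G \<sigma> \<delta> K lam x y"
    and "\<delta> \<le> norm xs / (\<mu> * acc_A lam K)"
  shows "(\<Sum>i\<in>{1..K}. acc_A lam i * (acc_residual lam x y i)\<^sup>2 / lam i) \<le> (\<mu> * norm xs / 4)\<^sup>2"
proof (rule residual_sum_le)
  have pos: "\<forall>i\<in>{1..K}. lam i > 0" using framework by (simp add: acc_framework_def)
  have "0 \<le> \<sigma>" "\<sigma> < 1" using assms(1-3) by simp_all
  have "0 \<le> 2 * acc_A lam K * (g (y K) - g xs)" using acc_A_nonneg[OF pos] minimizer by simp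
  then show "(2 * (1 - \<sigma>\<^sup>2) / 3) * (\<Sum>i\<in>{1..K}. acc_A lam i * (acc_residual lam x y i)\<^sup>2 / lam i)
      \<le> (norm xs + (1 + sqrt (1 + 3 * \<sigma>\<^sup>2 / (1 - \<sigma>\<^sup>2))) * \<delta> * acc_A lam K)\<^sup>2"
    using acc_potential_bound[OF \<open>0 \<le> \<sigma>\<close> \<open>\<sigma> < 1\<close> \<open>0 \<le> \<delta>\<close> convex grad minimizer framework order_refl]
      zero_le_power2[of "norm (x K - xs)"] by linarith
  show "acc_A lam K > 0" using pos \<open>1 \<le> K\<close> by (rule acc_A_pos)
qed (use assms in simp_all)

theorem mainTheorem15:
  fixes g :: "'a::euclidean_space \<Rightarrow> real" and G :: "'a \<Rightarrow> 'a"
    and \<alpha> \<sigma> \<rho> \<mu> \<delta> :: real and K :: nat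
    and lam :: "nat \<Rightarrow> real" and x y :: "nat \<Rightarrow> 'a" and xs :: 'a
    and \<omega> :: "real \<Rightarrow> real"
  assumes alpha: "0 \<le> \<alpha>" "\<alpha> < 1"
    and sigma: "\<sigma> = (1 + \<alpha>) / 2"
    and rho: "\<rho> = (1 - \<alpha>) / (1 - \<sigma>)"
    and mu: "\<mu> = 8 / sqrt (1 - \<alpha>)"
    and omega_pos: "\<forall>t\<ge>0. \<omega> t > 0"
    and omega_mono: "mono_on {0..} \<omega>"
    and convex: "convex_on UNIV g"
    and grad: "\<forall>z. (g has_derivative (\<lambda>h. G z \<bullet> h)) (at z)"
    and minimizer: "\<forall>z. g xs \<le> g z"
    and delta: "0 \<le> \<delta>"
    and K: "1 \<le> K"
    and framework: "acc_framework G \<sigma> \<delta> K lam x y"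
    and delta_small: "\<delta> \<le> norm xs / (\<mu> * acc_A lam K)"
    and lam_lower: "\<forall>k\<in>{1..K}. lam k \<ge> 1 / (\<rho> * \<omega> (norm (y k - acc_xt lam x y (k - 1))))"
  shows "(\<forall>k\<in>{1..K}. \<forall>J::nat. 0 < J \<and> real J < real k / 2 \<longrightarrow>
            acc_A lam k \<ge> min (4 ^ J / (\<rho> * \<omega> (\<mu> * norm xs / 4)))
              ((real k / real J)\<^sup>2 /
                 (16 * \<rho> * \<omega> (4 * \<mu> * norm xs / (real k / real J) powr (3/2)))))
       \<and> (\<forall>R. norm xs \<le> R \<longrightarrow> (\<forall>k\<in>{1..K}. acc_A lam k \<ge> 1 / (2 * \<omega> (2 * \<mu> * R))))"
proof -
  define r \<Theta> where "r = acc_residual lam x y" and "\<Theta> = \<mu> * norm xs / 4"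
  have pos: "\<forall>i\<in>{1..K}. lam i > 0" using framework by (simp add: acc_framework_def)
  have "\<rho> = 2" using alpha unfolding rho sigma by (simp add: field_simps)
  have "\<mu> > 0" using alpha by (simp add: mu)
  then have "0 \<le> \<Theta>" by (simp add: \<Theta>_def)
  have budget: "(\<Sum>i\<in>{1..k}. acc_A lam i * (r i)\<^sup>2 / lam i) \<le> \<Theta>\<^sup>2" if "k \<le> K" for k
    using weighted_residual_sum_mono[OF pos, of "{1..k}" r] that unfolding r_def \<Theta>_def
    using acc_residual_budget[OF alpha sigma mu convex grad minimizer delta K framework delta_small]
    by auto
  have lam_lower': "\<forall>i\<in>{1..K}. 1 / (2 * \<omega> (r i)) \<le> lam i"
    using lam_lower \<open>\<rho> = 2\<close> by (simp add: r_def acc_residual_def)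
  have "min (4 ^ J / (2 * \<omega> \<Theta>)) ((real k / real J)\<^sup>2 /
      (32 * \<omega> (16 * \<Theta> / (real k / real J) powr (3/2)))) \<le> acc_A lam k"
    if "k \<in> {1..K}" "0 < J" "real J < real k / 2" for k J
    using that pos lam_lower' budget \<open>0 \<le> \<Theta>\<close>
    by (intro acc_A_growth[where r = r, OF _ _ _ _ omega_pos omega_mono])
      (auto simp: r_def acc_residual_nonneg)
  moreover have "1 / (2 * \<omega> (2 * \<mu> * R)) \<le> acc_A lam k"
    if "norm xs \<le> R" "k \<in> {1..K}" for R k
  proof -
    have "0 \<le> R" using that(1) norm_ge_zero[of xs] by linarith
    then have "\<mu> * norm xs \<le> \<mu> * R" "0 \<le> \<mu> * R" using \<open>\<mu> > 0\<close> that(1) by simp_all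
    then have "\<Theta> \<le> 2 * \<mu> * R" by (simp add: \<Theta>_def)
    then show ?thesis
      using that(2) pos lam_lower' budget[OF order_refl] \<open>0 \<le> \<Theta>\<close>
      by (intro acc_A_ge_first_step[where r = r and \<Theta> = \<Theta>, OF pos _ _ _ _ _ _ omega_pos omega_mono])
        (auto simp: r_def acc_residual_nonneg)
  qed
  ultimately show ?thesis
    using \<open>\<rho> = 2\<close> by (simp add: \<Theta>_def mult.assoc)
qed

end
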